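(* In a distributive quasi-orthomodular nearsemilattice $A$, every initial segment $[0,p] = \{x \in A : x \le p\}$ is a Boolean algebra.
   Context: A nearsemilattice is a poset $A$ with least element $0$ in which any two elements having a common upper bound have a join $x \vee y$ (a partial operation). It is distributive if whenever $y \vee z$ exists and $x \le y \vee z$, then $x = y' \vee z'$ for some $y' \le y$ and $z' \le z$. An orthogonality on $A$ is a binary relation $\perp$ with: $x \perp y$ implies $y \perp x$; $x \le y$ and $y \perp z$ imply $x \perp z$; $x \perp 0$ for all $x$. A quasi-orthomodular nearsemilattice is a nearsemilattice with an orthogonality such that: (a) if $x \perp y$ then $x \vee y$ exists; (b) if $x \le y$ then $y = x \vee z$ for some $z$ with $x \perp z$; (c) if $x \perp y$, $x \perp z$ and $y \le x \vee z$, then $y \le z$. *)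

theory Defs
  imports Main
begin

text \<open>The poset A is modelled as a type of class order_bot; its least element 0 is bot.\<close>

definition is_join :: "'a::order \<Rightarrow> 'a \<Rightarrow> 'a \<Rightarrow> bool" where
  "is_join x y j \<longleftrightarrow> x \<le> j \<and> y \<le> j \<and> (\<forall>u. x \<le> u \<and> y \<le> u \<longrightarrow> j \<le> u)"

definition nearsemilattice :: "'a::order_bot itself \<Rightarrow> bool" where
  "nearsemilattice _ \<longleftrightarrow>
     (\<forall>x y::'a. (\<exists>u. x \<le> u \<and> y \<le> u) \<longrightarrow> (\<exists>j. is_join x y j))"

definition distributive_ns :: "'a::order_bot itself \<Rightarrow> bool" where
  "distributive_ns _ \<longleftrightarrow>
     (\<forall>x y z w::'a. is_join y z w \<and> x \<le> w \<longrightarrow>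
        (\<exists>y' z'. y' \<le> y \<and> z' \<le> z \<and> is_join y' z' x))"

definition orthogonality :: "('a::order_bot \<Rightarrow> 'a \<Rightarrow> bool) \<Rightarrow> bool" where
  "orthogonality orth \<longleftrightarrow>
     (\<forall>x y. orth x y \<longrightarrow> orth y x) \<and>
     (\<forall>x y z. x \<le> y \<and> orth y z \<longrightarrow> orth x z) \<and>
     (\<forall>x. orth x bot)"

definition quasi_orthomodular :: "('a::order_bot \<Rightarrow> 'a \<Rightarrow> bool) \<Rightarrow> bool" where
  "quasi_orthomodular orth \<longleftrightarrow>
     nearsemilattice TYPE('a) \<and> orthogonality orth \<and>
     (\<forall>x y. orth x y \<longrightarrow> (\<exists>j. is_join x y j)) \<and>
     (\<forall>x y. x \<le> y \<longrightarrow> (\<exists>z. orth x z \<and> is_join x z y)) \<and>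
     (\<forall>x y z w. orth x y \<and> orth x z \<and> is_join x z w \<and> y \<le> w \<longrightarrow> y \<le> z)"

definition boolean_algebra_on :: "'a::order set \<Rightarrow> bool" where
  "boolean_algebra_on S \<longleftrightarrow>
     (\<exists>b t sp nf.
        b \<in> S \<and> t \<in> S \<and> (\<forall>x\<in>S. b \<le> x \<and> x \<le> t) \<and>
        (\<forall>x\<in>S. \<forall>y\<in>S. sp x y \<in> S \<and> x \<le> sp x y \<and> y \<le> sp x y \<and>
                    (\<forall>u\<in>S. x \<le> u \<and> y \<le> u \<longrightarrow> sp x y \<le> u)) \<and>
        (\<forall>x\<in>S. \<forall>y\<in>S. nf x y \<in> S \<and> nf x y \<le> x \<and> nf x y \<le> y \<and>
                    (\<forall>u\<in>S. u \<le> x \<and> u \<le> y \<longrightarrow> u \<le> nf x y)) \<and>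
        (\<forall>x\<in>S. \<forall>y\<in>S. \<forall>z\<in>S. nf x (sp y z) = sp (nf x y) (nf x z)) \<and>
        (\<forall>x\<in>S. \<exists>y\<in>S. sp x y = t \<and> nf x y = b))"

end

theory Submission
  imports Defs
begin

text \<open>Inside [0,p] every y has an orthocomplement y' with y \<or> y' = p, and an element
  orthogonal to itself is 0, so y and y' have no common lower bound other than 0.
  Given x \<le> p = y \<or> y', distributivity splits x = a \<or> b with a \<le> y and b \<le> y';
  any common lower bound u of x and y splits likewise as u = c \<or> d with c \<le> a, and
  d \<le> y \<sqinter> y' forces d = 0, so u \<le> a: thus a is the meet of x and y.
  Distributivity of meets over joins is a second application of the splitting
  property, and the orthocomplement is a lattice complement.\<close>

definition is_meet :: "'a::order \<Rightarrow> 'a \<Rightarrow> 'a \<Rightarrow> bool" where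
  "is_meet x y m \<longleftrightarrow> m \<le> x \<and> m \<le> y \<and> (\<forall>u. u \<le> x \<and> u \<le> y \<longrightarrow> u \<le> m)"

lemma is_join_unique: "is_join x y j \<Longrightarrow> is_join x y j' \<Longrightarrow> j = j'"
  unfolding is_join_def by (meson order.antisym)

lemma is_meet_unique: "is_meet x y m \<Longrightarrow> is_meet x y m' \<Longrightarrow> m = m'"
  unfolding is_meet_def by (meson order.antisym)

lemma is_join_upper: "is_join x y j \<Longrightarrow> y \<le> j"
  unfolding is_join_def by blast

lemma is_join_least: "is_join x y j \<Longrightarrow> x \<le> u \<Longrightarrow> y \<le> u \<Longrightarrow> j \<le> u"
  unfolding is_join_def by blast

lemma is_meet_lower: "is_meet x y m \<Longrightarrow> m \<le> x"
  unfolding is_meet_def by blast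

lemma is_join_bot_right: "is_join (x::'a::order_bot) bot x"
  unfolding is_join_def by auto

lemma boolean_algebra_onI:
  fixes S :: "'a::order set"
  assumes "b \<in> S" "t \<in> S" "\<And>x. x \<in> S \<Longrightarrow> b \<le> x \<and> x \<le> t"
    and joins: "\<And>x y. x \<in> S \<Longrightarrow> y \<in> S \<Longrightarrow> \<exists>j\<in>S. is_join x y j"
    and meets: "\<And>x y. x \<in> S \<Longrightarrow> y \<in> S \<Longrightarrow> \<exists>m\<in>S. is_meet x y m"
    and distrib: "\<And>x y z w m a c. x \<in> S \<Longrightarrow> y \<in> S \<Longrightarrow> z \<in> S \<Longrightarrow>
        is_join y z w \<Longrightarrow> is_meet x w m \<Longrightarrow> is_meet x y a \<Longrightarrow> is_meet x z c \<Longrightarrow> is_join a c m"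
    and compl: "\<And>x. x \<in> S \<Longrightarrow> \<exists>y\<in>S. is_join x y t \<and> is_meet x y b"
  shows "boolean_algebra_on S"
proof -
  define sp :: "'a \<Rightarrow> 'a \<Rightarrow> 'a" where "sp x y = (THE j. is_join x y j)" for x y
  define nf :: "'a \<Rightarrow> 'a \<Rightarrow> 'a" where "nf x y = (THE m. is_meet x y m)" for x y
  have sp_eq: "sp x y = j" if "is_join x y j" for x y j
    unfolding sp_def using that by (rule the_equality) (rule is_join_unique[OF _ that])
  have nf_eq: "nf x y = m" if "is_meet x y m" for x y m
    unfolding nf_def using that by (rule the_equality) (rule is_meet_unique[OF _ that])
  have sp: "sp x y \<in> S \<and> is_join x y (sp x y)" if "x \<in> S" "y \<in> S" for x y
    using joins[OF that] sp_eq by blast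
  have nf: "nf x y \<in> S \<and> is_meet x y (nf x y)" if "x \<in> S" "y \<in> S" for x y
    using meets[OF that] nf_eq by blast
  show ?thesis
    unfolding boolean_algebra_on_def
  proof (rule exI[of _ b], rule exI[of _ t], rule exI[of _ sp], rule exI[of _ nf],
      intro conjI ballI impI)
    show "b \<in> S" "t \<in> S" by fact+
    fix x assume x: "x \<in> S"
    show "b \<le> x" "x \<le> t" using assms(3)[OF x] by auto
    from compl[OF x] obtain y where "y \<in> S" "is_join x y t" "is_meet x y b"
      by blast
    then show "\<exists>y\<in>S. sp x y = t \<and> nf x y = b"
      using sp_eq nf_eq by blast
    fix y assume y: "y \<in> S"
    show "sp x y \<in> S" "x \<le> sp x y" "y \<le> sp x y"
      using sp[OF x y] unfolding is_join_def by auto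
    show "sp x y \<le> u" if "u \<in> S" "x \<le> u \<and> y \<le> u" for u
      using sp[OF x y] that unfolding is_join_def by auto
    show "nf x y \<in> S" "nf x y \<le> x" "nf x y \<le> y"
      using nf[OF x y] unfolding is_meet_def by auto
    show "u \<le> nf x y" if "u \<in> S" "u \<le> x \<and> u \<le> y" for u
      using nf[OF x y] that unfolding is_meet_def by auto
    fix z assume z: "z \<in> S"
    have "is_meet x (sp y z) (nf x (sp y z))"
      using nf[OF x] sp[OF y z] by blast
    then have "is_join (nf x y) (nf x z) (nf x (sp y z))"
      using distrib[OF x y z] sp[OF y z] nf[OF x y] nf[OF x z] by blast
    then show "nf x (sp y z) = sp (nf x y) (nf x z)"
      by (simp add: sp_eq)
  qed
qed

lemma distributive_ns_splitting:
  assumes "distributive_ns TYPE('a::order_bot)" "is_join y z w" "(x::'a) \<le> w"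
  obtains y' z' where "y' \<le> y" "z' \<le> z" "is_join y' z' x"
  using assms unfolding distributive_ns_def by blast

lemma meet_join_distrib:
  fixes x y z w m a c :: "'a::order_bot"
  assumes dist: "distributive_ns TYPE('a)"
    and w: "is_join y z w" and m: "is_meet x w m"
    and a: "is_meet x y a" and c: "is_meet x z c"
  shows "is_join a c m"
proof -
  have "m \<le> w"
    using m unfolding is_meet_def by blast
  then obtain y' z' where "y' \<le> y" "z' \<le> z" and m_split: "is_join y' z' m"
    using distributive_ns_splitting[OF dist w] by blast
  moreover have "y' \<le> x" "z' \<le> x"
    using m_split m unfolding is_join_def is_meet_def by (meson order.trans)+
  ultimately have "y' \<le> a" "z' \<le> c"
    using a c unfolding is_meet_def by blast+
  moreover have "a \<le> m" "c \<le> m"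
    using a c w m unfolding is_meet_def is_join_def by (meson order.trans)+
  ultimately show ?thesis
    using m_split unfolding is_join_def by (meson order.trans)
qed

lemma orthogonality_sym: "orthogonality orth \<Longrightarrow> orth x y \<Longrightarrow> orth y x"
  unfolding orthogonality_def by blast

lemma orthogonality_downward: "orthogonality orth \<Longrightarrow> x \<le> y \<Longrightarrow> orth y z \<Longrightarrow> orth x z"
  unfolding orthogonality_def by blast

lemma orthogonality_bot: "orthogonality orth \<Longrightarrow> orth x bot"
  unfolding orthogonality_def by blast

lemma quasi_orthomodular_orthogonality: "quasi_orthomodular orth \<Longrightarrow> orthogonality orth"
  unfolding quasi_orthomodular_def by blast

lemma quasi_orthomodular_cancel:
  "quasi_orthomodular orth \<Longrightarrow> orth x y \<Longrightarrow> orth x z \<Longrightarrow> is_join x z w \<Longrightarrow> y \<le> w \<Longrightarrow> y \<le> z"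
  unfolding quasi_orthomodular_def by blast

lemma quasi_orthomodular_orthocomplement:
  "quasi_orthomodular orth \<Longrightarrow> x \<le> y \<Longrightarrow> \<exists>z. orth x z \<and> is_join x z y"
  unfolding quasi_orthomodular_def by blast

lemma orth_self_bot:
  assumes "quasi_orthomodular orth" "orth x x"
  shows "x = bot"
proof -
  have "orth x bot"
    using assms(1) by (simp add: orthogonality_bot quasi_orthomodular_orthogonality)
  then have "x \<le> bot"
    using quasi_orthomodular_cancel[OF assms(1,2) _ is_join_bot_right] by blast
  then show ?thesis
    by (simp add: bot_unique)
qed

lemma orth_common_lower_bound_bot:
  assumes qom: "quasi_orthomodular orth" and "orth x z" "u \<le> x" "u \<le> z"
  shows "u = bot"
proof -
  have orth: "orthogonality orth"
    using qom by (rule quasi_orthomodular_orthogonality)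
  have "orth z u"
    using orthogonality_sym[OF orth] orthogonality_downward[OF orth \<open>u \<le> x\<close> \<open>orth x z\<close>] .
  then have "orth u u"
    using orthogonality_downward[OF orth \<open>u \<le> z\<close>] by blast
  then show ?thesis
    using orth_self_bot[OF qom] by blast
qed

lemma orthocomplement_in_interval:
  assumes qom: "quasi_orthomodular orth" and "x \<le> p"
  obtains z where "orth x z" "is_join x z p" "is_meet x z bot"
proof -
  obtain z where z: "orth x z" "is_join x z p"
    using quasi_orthomodular_orthocomplement[OF qom \<open>x \<le> p\<close>] by blast
  moreover have "is_meet x z bot"
    using orth_common_lower_bound_bot[OF qom z(1)] unfolding is_meet_def by auto
  ultimately show thesis
    using that by blast
qed

lemma meet_exists_below:
  fixes x y p :: "'a::order_bot" and orth :: "'a \<Rightarrow> 'a \<Rightarrow> bool"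
  assumes dist: "distributive_ns TYPE('a)" and qom: "quasi_orthomodular orth"
    and "x \<le> p" "y \<le> p"
  shows "\<exists>m. is_meet x y m"
proof -
  obtain y' where y': "orth y y'" "is_join y y' p"
    using orthocomplement_in_interval[OF qom \<open>y \<le> p\<close>] by blast
  obtain a b where "a \<le> y" "b \<le> y'" and x_split: "is_join a b x"
    using distributive_ns_splitting[OF dist y'(2) \<open>x \<le> p\<close>] by blast
  have "u \<le> a" if "u \<le> x" "u \<le> y" for u
  proof -
    obtain c d where "c \<le> a" "d \<le> b" and u_split: "is_join c d u"
      using distributive_ns_splitting[OF dist x_split \<open>u \<le> x\<close>] by blast
    have "d = bot"
      using orth_common_lower_bound_bot[OF qom y'(1), of d] u_split \<open>u \<le> y\<close> \<open>d \<le> b\<close> \<open>b \<le> y'\<close>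
      unfolding is_join_def by (meson order.trans)
    then show "u \<le> a"
      using u_split \<open>c \<le> a\<close> unfolding is_join_def by auto
  qed
  then have "is_meet x y a"
    using x_split \<open>a \<le> y\<close> unfolding is_meet_def is_join_def by blast
  then show ?thesis ..
qed

theorem corollary5:
  fixes orth :: "'a::order_bot \<Rightarrow> 'a \<Rightarrow> bool" and p :: 'a
  assumes "nearsemilattice TYPE('a)"
    and "distributive_ns TYPE('a)"
    and "quasi_orthomodular orth"
  shows "boolean_algebra_on {x. bot \<le> x \<and> x \<le> p}"
proof (rule boolean_algebra_onI)
  let ?S = "{x. bot \<le> x \<and> x \<le> p}"
  show "bot \<in> ?S" "p \<in> ?S" "\<And>x. x \<in> ?S \<Longrightarrow> bot \<le> x \<and> x \<le> p"
    by auto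
  show "\<exists>j\<in>?S. is_join x y j" if xy: "x \<in> ?S" "y \<in> ?S" for x y
  proof -
    obtain j where "is_join x y j"
      using assms(1) xy unfolding nearsemilattice_def by blast
    with xy show ?thesis
      using is_join_least[of x y j p] by auto
  qed
  show "\<exists>m\<in>?S. is_meet x y m" if xy: "x \<in> ?S" "y \<in> ?S" for x y
  proof -
    obtain m where "is_meet x y m"
      using meet_exists_below[OF assms(2,3)] xy by blast
    with xy show ?thesis
      using is_meet_lower[of x y m] order.trans[of m x p] by auto
  qed
  show "is_join a c m" if "is_join y z w" "is_meet x w m" "is_meet x y a" "is_meet x z c"
    for x y z w m a c :: 'a
    using meet_join_distrib[OF assms(2) that] .
  show "\<exists>y\<in>?S. is_join x y p \<and> is_meet x y bot" if x: "x \<in> ?S" for x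
  proof -
    obtain z where "is_join x z p" "is_meet x z bot"
      using orthocomplement_in_interval[OF assms(3), of x p] x by blast
    then show ?thesis
      using is_join_upper[of x z p] by auto
  qed
qed

end
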